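(* Let $\Lambda$ be a recursive $\varepsilon$-number, and let $I$, $H$, $R_n$, $S_n$, $R_n^\alpha$, $S_n^\alpha$ be as in the context. Then for all $x, y \in H$, $n < \omega$ and $\alpha < \Lambda$: (1) $x R_n^{\alpha+1} y$ if and only if there exists $z \in H$ with $x R_n z$ and $z R_n^{\alpha} y$; (2) $x S_n^{\alpha+1} y$ if and only if there exists $z \in H$ with $x S_n z$ and $z S_n^{\alpha} y$.
   Context: Fix a recursive ordinal $\Lambda$ that is an $\varepsilon$-number, i.e. $\omega^\Lambda = \Lambda$. The ordinal logarithm is defined by $\ell(0)=0$ and $\ell(\alpha+\omega^\beta)=\beta$. An $\ell$-sequence (Ignatiev sequence) is a sequence of ordinals $x=\langle x_0,x_1,x_2,\dots\rangle$ indexed by $\omega$ with $x_{i+1}\le \ell(x_i)$ for all $i<\omega$. Let $I$ be the set of $\ell$-sequences all of whose entries are $<\Lambda$, and let $H\subseteq I$ be the set of those $x\in I$ such that $x_j=0$ for some $j<\omega$. For $n<\omega$, define $x R_n y$ for $x,y\in I$ (and $x S_n y$ for $x,y\in H$, the same condition) by: $x_m>y_m$ for all $m\le n$ and $x_i\ge y_i$ for all $i>n$. Define $R_n^\alpha$ on $I$ recursively: $x R_n^0 y$ iff $x=y$; $x R_n^{1+\alpha} y$ iff for every $\beta<1+\alpha$ there is $z\in I$ with $x R_n z$ and $z R_n^\beta y$. Define $S_n^\alpha$ on $H$ in the same way, with $S_n$ in place of $R_n$ and $z$ ranging over $H$. *)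

theory Defs
  imports Main
begin

text \<open>Ordinals are modelled as elements of an arbitrary well-ordered type 'o
(each element denotes the order type of its initial segment). Ordinal
arithmetic is defined order-theoretically inside 'o.\<close>

definition ord_iso :: "'a::linorder set \<Rightarrow> 'b::linorder set \<Rightarrow> bool" where
  "ord_iso A B \<longleftrightarrow> (\<exists>f. bij_betw f A B \<and> (\<forall>x\<in>A. \<forall>y\<in>A. x < y \<longrightarrow> f x < f y))"

definition ozero :: "'o::wellorder" where
  "ozero = (LEAST x. True)"

definition osuc :: "'o::wellorder \<Rightarrow> 'o" where
  "osuc a = (LEAST x. a < x)"

text \<open>oplus_eq a c g : a + c = g (the interval [a,g) has order type c)\<close>
definition oplus_eq :: "'o::wellorder \<Rightarrow> 'o \<Rightarrow> 'o \<Rightarrow> bool" where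
  "oplus_eq a c g \<longleftrightarrow> a \<le> g \<and> ord_iso {x. a \<le> x \<and> x < g} {x. x < c}"

definition indecomp :: "'o::wellorder \<Rightarrow> bool" where
  "indecomp c \<longleftrightarrow> ozero < c \<and> (\<forall>a<c. oplus_eq a c c)"

text \<open>omega_pow_eq b c : c = omega^b (c is the b-th indecomposable ordinal)\<close>
definition omega_pow_eq :: "'o::wellorder \<Rightarrow> 'o \<Rightarrow> bool" where
  "omega_pow_eq b c \<longleftrightarrow> indecomp c \<and> ord_iso {d. d < c \<and> indecomp d} {x. x < b}"

definition is_ell :: "'o::wellorder \<Rightarrow> 'o \<Rightarrow> bool" where
  "is_ell g b \<longleftrightarrow> (g = ozero \<and> b = ozero) \<or> (\<exists>a c. omega_pow_eq b c \<and> oplus_eq a c g)"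

definition ell :: "'o::wellorder \<Rightarrow> 'o" where
  "ell g = (THE b. is_ell g b)"

definition epsilon_number :: "'o::wellorder \<Rightarrow> bool" where
  "epsilon_number L \<longleftrightarrow> omega_pow_eq L L"

definition Iset :: "'o::wellorder \<Rightarrow> (nat \<Rightarrow> 'o) set" where
  "Iset L = {x. (\<forall>i. x (Suc i) \<le> ell (x i)) \<and> (\<forall>i. x i < L)}"

definition Hset :: "'o::wellorder \<Rightarrow> (nat \<Rightarrow> 'o) set" where
  "Hset L = {x \<in> Iset L. \<exists>j. x j = ozero}"

definition Rn :: "nat \<Rightarrow> (nat \<Rightarrow> 'o::wellorder) \<Rightarrow> (nat \<Rightarrow> 'o) \<Rightarrow> bool" where
  "Rn n x y \<longleftrightarrow> (\<forall>m\<le>n. x m > y m) \<and> (\<forall>i>n. x i \<ge> y i)"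

text \<open>Iterated relation R^alpha over domain D:
  R^0 = identity; for alpha = 1 + alpha' > 0 (so beta < 1+alpha' iff beta < alpha):
  x R^alpha y iff for all beta < alpha there is z in D with x R z and z R^beta y.\<close>
definition rel_pow :: "('s \<Rightarrow> 's \<Rightarrow> bool) \<Rightarrow> 's set \<Rightarrow> 'o::wellorder \<Rightarrow> 's \<Rightarrow> 's \<Rightarrow> bool" where
  "rel_pow R D = wfrec {(a, b). a < b}
     (\<lambda>f \<alpha> x y. if \<alpha> = ozero then x = y
                 else (\<forall>\<beta><\<alpha>. \<exists>z\<in>D. R x z \<and> f \<beta> z y))"

end

theory Submission
  imports Defs
begin

text \<open>For a transitive relation \<open>R\<close>, \<open>x R\<^sup>\<alpha>\<^sup>+\<^sup>1 y\<close> amounts to a single step \<open>x R z R\<^sup>\<alpha> y\<close>: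
  the clause for \<open>\<beta> = \<alpha>\<close> in the definition is exactly that step, and the clauses for
  \<open>\<beta> < \<alpha>\<close> follow from it by transitivity. This gives the statement about \<open>S\<^sub>n\<close>.
  For \<open>R\<^sub>n\<close> the intermediate point \<open>z\<close> lies in \<open>I\<close> but perhaps not in \<open>H\<close>. Since
  \<open>y \<in> H\<close> vanishes from some position on, we replace \<open>z\<close> and, recursively, all points
  witnessing \<open>z R\<^sup>\<alpha> y\<close> by their truncations to zero beyond a position \<open>N \<ge> n\<close> past
  which \<open>y\<close> vanishes: truncation preserves \<open>\<ell>\<close>-sequences and \<open>R\<^sub>n\<close>-steps and
  fixes \<open>y\<close>.\<close>

lemma rel_pow_eq:
  "rel_pow R D (\<alpha>::'o::wellorder) x y \<longleftrightarrow>
     (if \<alpha> = ozero then x = y else (\<forall>\<beta><\<alpha>. \<exists>z\<in>D. R x z \<and> rel_pow R D \<beta> z y))"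
  unfolding rel_pow_def
  by (subst wfrec[OF wellorder_class.wf]) (simp add: cut_apply)

lemma ozero_le [simp]: "ozero \<le> (x::'o::wellorder)"
  unfolding ozero_def by (rule Least_le) simp

lemma less_osuc_self: "(\<alpha>::'o::wellorder) < \<gamma> \<Longrightarrow> \<alpha> < osuc \<alpha>"
  unfolding osuc_def by (rule LeastI)

lemma less_osuc_iff: "(\<alpha>::'o::wellorder) < \<gamma> \<Longrightarrow> \<beta> < osuc \<alpha> \<longleftrightarrow> \<beta> \<le> \<alpha>"
proof
  assume "\<beta> < osuc \<alpha>"
  moreover have "\<alpha> < \<beta> \<Longrightarrow> osuc \<alpha> \<le> \<beta>"
    unfolding osuc_def by (rule Least_le)
  ultimately show "\<beta> \<le> \<alpha>" by (meson leD leI)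
qed (metis le_less_trans less_osuc_self)

lemma osuc_neq_ozero: "(\<alpha>::'o::wellorder) < \<gamma> \<Longrightarrow> osuc \<alpha> \<noteq> ozero"
  by (metis less_osuc_self not_less ozero_le)

lemma rel_pow_osuc_iff:
  assumes "transp R" and "(\<alpha>::'o::wellorder) < \<gamma>"
  shows "rel_pow R D (osuc \<alpha>) x y \<longleftrightarrow> (\<exists>z\<in>D. R x z \<and> rel_pow R D \<alpha> z y)"
proof
  assume "rel_pow R D (osuc \<alpha>) x y"
  then show "\<exists>z\<in>D. R x z \<and> rel_pow R D \<alpha> z y"
    using osuc_neq_ozero[OF \<open>\<alpha> < \<gamma>\<close>] less_osuc_self[OF \<open>\<alpha> < \<gamma>\<close>]
    by (subst (asm) rel_pow_eq) auto
next
  assume "\<exists>z\<in>D. R x z \<and> rel_pow R D \<alpha> z y"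
  then obtain z where z: "z \<in> D" "R x z" "rel_pow R D \<alpha> z y" by blast
  have "\<exists>w\<in>D. R x w \<and> rel_pow R D \<beta> w y" if "\<beta> \<le> \<alpha>" for \<beta>
  proof (cases "\<beta> = \<alpha>")
    case False
    with that have "\<beta> < \<alpha>" by simp
    moreover from this have "\<alpha> \<noteq> ozero" by (metis not_less ozero_le)
    ultimately have "\<exists>w\<in>D. R z w \<and> rel_pow R D \<beta> w y"
      using z(3) by (subst (asm) rel_pow_eq) auto
    with transpD[OF \<open>transp R\<close> z(2)] show ?thesis by blast
  qed (use z in blast)
  then show "rel_pow R D (osuc \<alpha>) x y"
    using osuc_neq_ozero[OF \<open>\<alpha> < \<gamma>\<close>] less_osuc_iff[OF \<open>\<alpha> < \<gamma>\<close>]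
    by (subst rel_pow_eq) auto
qed

lemma transp_Rn: "transp (Rn n :: (nat \<Rightarrow> 'o::wellorder) \<Rightarrow> _)"
  unfolding transp_def Rn_def by (meson less_trans order_trans)

lemma ell_ozero [simp]: "ell (ozero::'o::wellorder) = ozero"
proof -
  have "b = ozero" if "is_ell (ozero::'o) b" for b
  proof (rule ccontr)
    assume "b \<noteq> ozero"
    with that obtain a c where "omega_pow_eq b c" "oplus_eq a c (ozero::'o)"
      unfolding is_ell_def by blast
    then have "ozero < c" and iso: "ord_iso {x. a \<le> x \<and> x < (ozero::'o)} {x. x < c}"
      unfolding omega_pow_eq_def indecomp_def oplus_eq_def by auto
    have "{x. a \<le> x \<and> x < (ozero::'o)} = {}" by (auto simp: not_less)
    with iso have "{x. x < c} = {}" unfolding ord_iso_def bij_betw_def by auto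
    with \<open>ozero < c\<close> show False by auto
  qed
  then show ?thesis
    unfolding ell_def by (intro the_equality) (auto simp: is_ell_def)
qed

lemma Hset_subset_Iset: "Hset L \<subseteq> Iset L"
  unfolding Hset_def by auto

lemma Hset_eventually_ozero:
  assumes "y \<in> Hset L" obtains j where "\<forall>i\<ge>j. y i = ozero"
proof -
  from assms obtain j where j: "y j = ozero" and ell: "\<forall>i. y (Suc i) \<le> ell (y i)"
    unfolding Hset_def Iset_def by auto
  have "y (j + k) = ozero" for k
  proof (induction k)
    case (Suc k)
    then have "y (Suc (j + k)) \<le> ozero" using ell by (metis ell_ozero)
    then show ?case using ozero_le[of "y (Suc (j + k))"] by simp
  qed (simp add: j)
  then show ?thesis using that by (metis le_add_diff_inverse)
qed

definition truncate_seq :: "nat \<Rightarrow> (nat \<Rightarrow> 'o::wellorder) \<Rightarrow> nat \<Rightarrow> 'o" where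
  "truncate_seq N z = (\<lambda>i. if i \<le> N then z i else ozero)"

lemma truncate_seq_in_Hset: "z \<in> Iset L \<Longrightarrow> truncate_seq N z \<in> Hset L"
  unfolding Hset_def Iset_def truncate_seq_def
  by (auto intro: le_less_trans intro!: exI[of _ "Suc N"])

lemma Rn_truncate_seq:
  "Rn n x z \<Longrightarrow> n \<le> N \<Longrightarrow> Rn n (truncate_seq N x) (truncate_seq N z)"
  unfolding Rn_def truncate_seq_def by auto

lemma Rn_truncate_seq_right: "Rn n x z \<Longrightarrow> n \<le> N \<Longrightarrow> Rn n x (truncate_seq N z)"
  unfolding Rn_def truncate_seq_def by (auto intro: order_trans)

lemma rel_pow_truncate_seq:
  assumes y: "\<forall>i>N. y i = ozero" and "n \<le> N"
    and "rel_pow (Rn n) (Iset L) (\<alpha>::'o::wellorder) z y"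
  shows "rel_pow (Rn n) (Iset L) \<alpha> (truncate_seq N z) y"
  using assms(3)
proof (induction \<alpha> arbitrary: z rule: less_induct)
  case (less \<alpha>)
  show ?case
  proof (cases "\<alpha> = ozero")
    case True
    with less.prems y have "truncate_seq N z = y"
      by (auto simp: rel_pow_eq truncate_seq_def)
    with True show ?thesis by (simp add: rel_pow_eq)
  next
    case False
    have "\<exists>w\<in>Iset L. Rn n (truncate_seq N z) w \<and> rel_pow (Rn n) (Iset L) \<beta> w y"
      if "\<beta> < \<alpha>" for \<beta>
    proof -
      from less.prems False that obtain w
        where "w \<in> Iset L" "Rn n z w" "rel_pow (Rn n) (Iset L) \<beta> w y"
        by (subst (asm) rel_pow_eq) auto
      with Hset_subset_Iset truncate_seq_in_Hset Rn_truncate_seq[OF _ \<open>n \<le> N\<close>]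
        less.IH[OF that] show ?thesis by blast
    qed
    with False show ?thesis by (subst rel_pow_eq) simp
  qed
qed

lemma Rn_rel_pow_witness_in_Hset:
  assumes "y \<in> Hset L" and "z \<in> Iset L" "Rn n x z" "rel_pow (Rn n) (Iset L) \<alpha> z y"
  shows "\<exists>z\<in>Hset L. Rn n x z \<and> rel_pow (Rn n) (Iset L) (\<alpha>::'o::wellorder) z y"
proof -
  obtain j where "\<forall>i\<ge>j. y i = ozero"
    using Hset_eventually_ozero[OF \<open>y \<in> Hset L\<close>] .
  then have y: "\<forall>i>max n j. y i = ozero" by auto
  have "n \<le> max n j" by simp
  show ?thesis
  proof (intro bexI conjI)
    show "truncate_seq (max n j) z \<in> Hset L"
      using \<open>z \<in> Iset L\<close> by (rule truncate_seq_in_Hset)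
    show "Rn n x (truncate_seq (max n j) z)"
      using \<open>Rn n x z\<close> \<open>n \<le> max n j\<close> by (rule Rn_truncate_seq_right)
    show "rel_pow (Rn n) (Iset L) \<alpha> (truncate_seq (max n j) z) y"
      using y \<open>n \<le> max n j\<close> assms(4) by (rule rel_pow_truncate_seq)
  qed
qed

theorem proposition4p6:
  fixes \<Lambda> :: "'o::wellorder"
  assumes "epsilon_number \<Lambda>"
  shows "\<forall>x\<in>Hset \<Lambda>. \<forall>y\<in>Hset \<Lambda>. \<forall>n. \<forall>\<alpha><\<Lambda>.
    (rel_pow (Rn n) (Iset \<Lambda>) (osuc \<alpha>) x y \<longleftrightarrow>
       (\<exists>z\<in>Hset \<Lambda>. Rn n x z \<and> rel_pow (Rn n) (Iset \<Lambda>) \<alpha> z y)) \<and>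
    (rel_pow (Rn n) (Hset \<Lambda>) (osuc \<alpha>) x y \<longleftrightarrow>
       (\<exists>z\<in>Hset \<Lambda>. Rn n x z \<and> rel_pow (Rn n) (Hset \<Lambda>) \<alpha> z y))"
proof (intro ballI allI impI conjI)
  fix x y n and \<alpha> :: 'o
  assume "y \<in> Hset \<Lambda>" and "\<alpha> < \<Lambda>"
  note succ = rel_pow_osuc_iff[OF transp_Rn \<open>\<alpha> < \<Lambda>\<close>]
  show "rel_pow (Rn n) (Hset \<Lambda>) (osuc \<alpha>) x y \<longleftrightarrow>
    (\<exists>z\<in>Hset \<Lambda>. Rn n x z \<and> rel_pow (Rn n) (Hset \<Lambda>) \<alpha> z y)"
    by (rule succ)
  have "(\<exists>z\<in>Iset \<Lambda>. Rn n x z \<and> rel_pow (Rn n) (Iset \<Lambda>) \<alpha> z y) \<longleftrightarrow>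
    (\<exists>z\<in>Hset \<Lambda>. Rn n x z \<and> rel_pow (Rn n) (Iset \<Lambda>) \<alpha> z y)"
    using Rn_rel_pow_witness_in_Hset[OF \<open>y \<in> Hset \<Lambda>\<close>] Hset_subset_Iset by blast
  with succ show "rel_pow (Rn n) (Iset \<Lambda>) (osuc \<alpha>) x y \<longleftrightarrow>
    (\<exists>z\<in>Hset \<Lambda>. Rn n x z \<and> rel_pow (Rn n) (Iset \<Lambda>) \<alpha> z y)"
    by (rule trans)
qed

end
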